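(* Let $n \ge 2$. Amongst all connected bipartite graphs on $n$ vertices, the maximum value of the normalized Graovac-Ghorbani index $\mathrm{NGG}$, and also the maximum value of the Graovac-Ghorbani index $\mathrm{GG}$, is attained by the complete bipartite graph $K_{\lfloor n/2\rfloor, \lceil n/2\rceil}$, and by no other such graph.
   Context: All graphs are finite, simple, undirected and connected. For an edge $uv$ of a graph $G$, let $n_u = |\{w \in V(G) : d(w,u) < d(w,v)\}|$ and $n_v = |\{w \in V(G) : d(w,v) < d(w,u)\}|$, where $d$ is the shortest-path distance. The Graovac-Ghorbani index is $\mathrm{GG}(G) = \sum_{uv \in E(G)} \sqrt{\frac{n_u + n_v - 2}{n_u n_v}}$ and the normalized Graovac-Ghorbani index is $\mathrm{NGG}(G) = \sum_{uv \in E(G)} \frac{1}{\sqrt{n_u n_v}}$. *)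

theory Defs
  imports Complex_Main
begin

type_synonym 'a graph = "'a set \<times> 'a set set"

definition verts :: "'a graph \<Rightarrow> 'a set" where "verts G = fst G"
definition edges :: "'a graph \<Rightarrow> 'a set set" where "edges G = snd G"

definition simple_graph :: "'a graph \<Rightarrow> bool" where
  "simple_graph G \<longleftrightarrow> finite (verts G) \<and>
     (\<forall>e\<in>edges G. \<exists>u v. e = {u, v} \<and> u \<noteq> v \<and> u \<in> verts G \<and> v \<in> verts G)"

definition adj :: "'a graph \<Rightarrow> 'a \<Rightarrow> 'a \<Rightarrow> bool" where
  "adj G u v \<longleftrightarrow> {u, v} \<in> edges G"

definition walk :: "'a graph \<Rightarrow> 'a list \<Rightarrow> bool" where
  "walk G p \<longleftrightarrow> p \<noteq> [] \<and> set p \<subseteq> verts G \<and>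
     (\<forall>i. Suc i < length p \<longrightarrow> adj G (p ! i) (p ! Suc i))"

definition connected_graph :: "'a graph \<Rightarrow> bool" where
  "connected_graph G \<longleftrightarrow> verts G \<noteq> {} \<and>
     (\<forall>u\<in>verts G. \<forall>v\<in>verts G. \<exists>p. walk G p \<and> hd p = u \<and> last p = v)"

definition dist :: "'a graph \<Rightarrow> 'a \<Rightarrow> 'a \<Rightarrow> nat" where
  "dist G u v = (LEAST k. \<exists>p. walk G p \<and> hd p = u \<and> last p = v \<and> length p = Suc k)"

definition bipartite :: "'a graph \<Rightarrow> bool" where
  "bipartite G \<longleftrightarrow> (\<exists>X Y. X \<inter> Y = {} \<and> X \<union> Y = verts G \<and>
     (\<forall>e\<in>edges G. \<exists>x\<in>X. \<exists>y\<in>Y. e = {x, y}))"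

definition nclose :: "'a graph \<Rightarrow> 'a \<Rightarrow> 'a \<Rightarrow> nat" where
  "nclose G u v = card {w \<in> verts G. dist G w u < dist G w v}"

text \<open>Value of a (symmetric) edge function f(n_u, n_v) on an edge e = {u,v}.\<close>
definition edge_val :: "'a graph \<Rightarrow> (nat \<Rightarrow> nat \<Rightarrow> real) \<Rightarrow> 'a set \<Rightarrow> real" where
  "edge_val G f e = (let u = (SOME u. u \<in> e); v = (SOME v. v \<in> e \<and> v \<noteq> u)
                     in f (nclose G u v) (nclose G v u))"

definition GG :: "'a graph \<Rightarrow> real" where
  "GG G = (\<Sum>e\<in>edges G. edge_val G
      (\<lambda>a b. sqrt ((real a + real b - 2) / (real a * real b))) e)"

definition NGG :: "'a graph \<Rightarrow> real" where
  "NGG G = (\<Sum>e\<in>edges G. edge_val G (\<lambda>a b. 1 / sqrt (real a * real b)) e)"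

definition complete_bipartite :: "nat \<Rightarrow> nat \<Rightarrow> nat graph" where
  "complete_bipartite a b = ({0..<a+b}, {{i, j} | i j. i < a \<and> a \<le> j \<and> j < a + b})"

definition graph_iso :: "'a graph \<Rightarrow> 'b graph \<Rightarrow> bool" where
  "graph_iso G H \<longleftrightarrow> (\<exists>f. bij_betw f (verts G) (verts H) \<and>
     (\<forall>u\<in>verts G. \<forall>v\<in>verts G. {u, v} \<in> edges G \<longleftrightarrow> {f u, f v} \<in> edges H))"

end

theory Submission
  imports Defs
begin

text \<open>Let G be connected and bipartite with sides X and Y, and let xy be an edge, x in X. Since G
  has no triangles, x and its neighbours other than y are closer to x than to y, so n_x is at
  least deg x, and likewise n_y is at least deg y. By AM-GM with weight c = sqrt (|Y| / |X|),
  1 / sqrt (n_x n_y) is at most (c / deg x + 1 / (c deg y)) / 2, and summing over the edges the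
  reciprocal degrees at each vertex add up to 1, whence
  NGG G <= (c |X| + |Y| / c) / 2 = sqrt (|X| |Y|) <= sqrt ((n div 2) (n - n div 2)).
  If some x in X and y in Y are not adjacent, the last edge uy of a shortest x-y path (of length
  at least 3) has x as an additional vertex closer to u, so the bound is strict; K_{a,b} attains it.
  As n_u + n_v <= n, every term of GG is at most sqrt (n - 2) times the corresponding term of NGG,
  so GG inherits the bound, and for n > 2 also the equality case.\<close>

section \<open>Walks and distances\<close>

lemma adj_sym: "adj G a b \<Longrightarrow> adj G b a"
  by (simp add: adj_def insert_commute)

lemma adj_imp_verts:
  "simple_graph G \<Longrightarrow> adj G a b \<Longrightarrow> a \<in> verts G \<and> b \<in> verts G \<and> a \<noteq> b"
  unfolding simple_graph_def adj_def by (fastforce simp: doubleton_eq_iff)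

lemma walk_singleton: "u \<in> verts G \<Longrightarrow> walk G [u]"
  by (simp add: walk_def)

lemma walk_edge: "simple_graph G \<Longrightarrow> adj G u v \<Longrightarrow> walk G [u, v]"
  using adj_imp_verts[of G u v] by (auto simp: walk_def less_Suc_eq)

lemma walk_path2:
  assumes "simple_graph G" "adj G u w" "adj G w v"
  shows "walk G [u, w, v]"
  unfolding walk_def
proof (intro conjI allI impI)
  show "set [u, w, v] \<subseteq> verts G"
    using adj_imp_verts[OF assms(1,2)] adj_imp_verts[OF assms(1,3)] by simp
  fix i assume "Suc i < length [u, w, v]"
  then have "i = 0 \<or> i = 1" by (simp add: less_Suc_eq)
  then show "adj G ([u, w, v] ! i) ([u, w, v] ! Suc i)" using assms by auto
qed simp

lemma walk_step: "walk G p \<Longrightarrow> Suc i < length p \<Longrightarrow> adj G (p ! i) (p ! Suc i)"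
  by (simp add: walk_def)

lemma walk_hd_last:
  assumes "walk G p"
  shows "hd p = p ! 0" "last p = p ! (length p - 1)"
  using assms by (auto simp: walk_def hd_conv_nth last_conv_nth)

lemma walk_take:
  assumes "walk G p" "0 < k" "k \<le> length p"
  shows "walk G (take k p)" "hd (take k p) = hd p" "last (take k p) = p ! (k - 1)"
  using assms by (auto simp: walk_def last_conv_nth dest: in_set_takeD)

lemma dist_le_walk:
  assumes "walk G p" "hd p = u" "last p = v"
  shows "dist G u v \<le> length p - 1"
proof -
  have "length p = Suc (length p - 1)" using assms(1) by (simp add: walk_def)
  then show ?thesis unfolding dist_def using assms by (intro Least_le) blast
qed

lemma shortest_walk_exists:
  assumes "connected_graph G" "u \<in> verts G" "v \<in> verts G"
  obtains p where "walk G p" "hd p = u" "last p = v" "length p = Suc (dist G u v)"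
proof -
  obtain p where p: "walk G p" "hd p = u" "last p = v"
    using assms unfolding connected_graph_def by blast
  have "length p = Suc (length p - 1)" using p(1) by (simp add: walk_def)
  then have "\<exists>k p. walk G p \<and> hd p = u \<and> last p = v \<and> length p = Suc k"
    using p by blast
  from LeastI_ex[OF this] show ?thesis
    using that unfolding dist_def by blast
qed

lemma dist_self: "u \<in> verts G \<Longrightarrow> dist G u u = 0"
  using dist_le_walk[OF walk_singleton, of u G u u] by simp

lemma dist_pos:
  assumes "connected_graph G" "u \<in> verts G" "v \<in> verts G" "u \<noteq> v"
  shows "1 \<le> dist G u v"
proof (rule ccontr)
  assume "\<not> ?thesis"
  then have "dist G u v = 0" by simp
  moreover obtain p where p: "walk G p" "hd p = u" "last p = v" "length p = Suc (dist G u v)"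
    using shortest_walk_exists[OF assms(1-3)] .
  ultimately have "u = p ! 0" "v = p ! 0" using walk_hd_last[OF p(1)] by auto
  then show False using assms(4) by simp
qed

lemma dist_adj:
  assumes "simple_graph G" "connected_graph G" "adj G u v"
  shows "dist G u v = 1"
  using dist_le_walk[OF walk_edge[OF assms(1,3)]] dist_pos[OF assms(2)]
    adj_imp_verts[OF assms(1,3)] by fastforce

lemma dist_ge_2:
  assumes "simple_graph G" "connected_graph G" "u \<in> verts G" "v \<in> verts G"
    "u \<noteq> v" "\<not> adj G u v"
  shows "2 \<le> dist G u v"
proof (rule ccontr)
  assume "\<not> ?thesis"
  with dist_pos[OF assms(2-5)] have d: "dist G u v = 1" by simp
  obtain p where p: "walk G p" "hd p = u" "last p = v" "length p = Suc (dist G u v)"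
    using shortest_walk_exists[OF assms(2-4)] .
  have "adj G (p ! 0) (p ! 1)" using walk_step[OF p(1), of 0] p(4) d by simp
  moreover have "u = p ! 0" "v = p ! 1" using p walk_hd_last[OF p(1)] d by auto
  ultimately show False using assms(6) by simp
qed

section \<open>Vertex counts along an edge\<close>

definition neighbours :: "'a graph \<Rightarrow> 'a \<Rightarrow> 'a set" where
  "neighbours G u = {w \<in> verts G. adj G u w}"

definition degree :: "'a graph \<Rightarrow> 'a \<Rightarrow> nat" where
  "degree G u = card (neighbours G u)"

definition closer :: "'a graph \<Rightarrow> 'a \<Rightarrow> 'a \<Rightarrow> 'a set" where
  "closer G u v = {w \<in> verts G. dist G w u < dist G w v}"

definition end_in :: "'a set \<Rightarrow> 'a set \<Rightarrow> 'a" where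
  "end_in S e = (SOME x. x \<in> e \<and> x \<in> S)"

lemma nclose_eq_card_closer: "nclose G u v = card (closer G u v)"
  by (simp add: nclose_def closer_def)

lemma nclose_add_nclose_le:
  assumes "finite (verts G)"
  shows "nclose G u v + nclose G v u \<le> card (verts G)"
proof -
  have disj: "closer G u v \<inter> closer G v u = {}"
    and sub: "closer G u v \<union> closer G v u \<subseteq> verts G"
    unfolding closer_def by auto
  have fin: "finite (closer G u v)" "finite (closer G v u)"
    using finite_subset[OF sub assms] by auto
  show ?thesis
    unfolding nclose_eq_card_closer card_Un_disjoint[OF fin disj, symmetric]
    by (rule card_mono[OF assms sub])
qed

lemma edge_val_doubleton:
  assumes "u \<noteq> v" "\<And>a b. f a b = f b a"
  shows "edge_val G f {u, v} = f (nclose G u v) (nclose G v u)"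
proof -
  define u' where "u' = (SOME u'. u' \<in> {u, v})"
  have u': "u' \<in> {u, v}" unfolding u'_def by (rule someI[of _ u]) simp
  define v' where "v' = (SOME v'. v' \<in> {u, v} \<and> v' \<noteq> u')"
  have v': "v' \<in> {u, v} \<and> v' \<noteq> u'" unfolding v'_def
    by (rule someI[of _ "if u' = u then v else u"]) (use u' assms(1) in auto)
  have "edge_val G f {u, v} = f (nclose G u' v') (nclose G v' u')"
    unfolding edge_val_def Let_def u'_def v'_def ..
  moreover have "u' = u \<and> v' = v \<or> u' = v \<and> v' = u" using u' v' by auto
  ultimately show ?thesis using assms(2) by auto
qed

lemma sum_inverse_card_fibres:
  assumes "finite E"
  shows "(\<Sum>e\<in>E. 1 / real (card {e' \<in> E. f e' = f e})) = real (card (f ` E))"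
proof -
  have "(\<Sum>e\<in>E. 1 / real (card {e' \<in> E. f e' = f e}))
      = (\<Sum>y\<in>f ` E. \<Sum>e\<in>{x \<in> E. f x = y}. 1 / real (card {e' \<in> E. f e' = f e}))"
    by (rule sum.image_gen[OF assms])
  also have "\<dots> = (\<Sum>y\<in>f ` E. 1)"
  proof (rule sum.cong[OF refl])
    fix y assume y: "y \<in> f ` E"
    define S where "S = {x \<in> E. f x = y}"
    have "card S > 0" using y assms unfolding S_def by (auto simp: card_gt_0_iff)
    have "(\<Sum>e\<in>S. 1 / real (card {e' \<in> E. f e' = f e})) = (\<Sum>e\<in>S. 1 / real (card S))"
      by (rule sum.cong) (auto simp: S_def)
    also have "\<dots> = 1" using \<open>card S > 0\<close> by simp
    finally show "(\<Sum>e\<in>{x \<in> E. f x = y}. 1 / real (card {e' \<in> E. f e' = f e})) = 1"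
      unfolding S_def .
  qed
  finally show ?thesis by simp
qed

lemma inverse_sqrt_mult_le_mean:
  fixes p q dp dq c :: real
  assumes "0 < dp" "0 < dq" "dp \<le> p" "dq \<le> q" "0 < c"
  shows "1 / sqrt (p * q) \<le> (c / dp + 1 / (c * dq)) / 2"
    and "dp < p \<or> dq < q \<Longrightarrow> 1 / sqrt (p * q) < (c / dp + 1 / (c * dq)) / 2"
proof -
  define s where "s = c / dp"
  define t where "t = 1 / (c * dq)"
  have "s > 0" "t > 0" unfolding s_def t_def using assms by auto
  have "0 \<le> (sqrt s - sqrt t)\<^sup>2" by simp
  also have "\<dots> = s + t - 2 * sqrt (s * t)" using \<open>s > 0\<close> \<open>t > 0\<close>
    by (simp add: power2_diff real_sqrt_mult)
  finally have am_gm: "sqrt (s * t) \<le> (s + t) / 2" by simp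
  have "s * t = 1 / (dp * dq)" unfolding s_def t_def using assms by (simp add: field_simps)
  then have st: "sqrt (s * t) = 1 / sqrt (dp * dq)" by (simp add: real_sqrt_divide)
  have pos: "0 < dp * dq" using assms by simp
  have "dp * dq \<le> p * q" using assms by (intro mult_mono) auto
  then have "1 / sqrt (p * q) \<le> 1 / sqrt (dp * dq)"
    using pos by (intro divide_left_mono) auto
  then show "1 / sqrt (p * q) \<le> (c / dp + 1 / (c * dq)) / 2"
    using am_gm st unfolding s_def t_def by linarith
  assume "dp < p \<or> dq < q"
  then have "dp * dq < p * q"
  proof
    assume "dp < p"
    then have "dp * dq < p * dq" using assms(2) by simp
    also have "\<dots> \<le> p * q" using assms by (intro mult_left_mono) auto
    finally show ?thesis .
  next
    assume "dq < q"
    then have "dp * dq < dp * q" using assms(1) by simp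
    also have "\<dots> \<le> p * q" using assms by (intro mult_right_mono) auto
    finally show ?thesis .
  qed
  then have "1 / sqrt (p * q) < 1 / sqrt (dp * dq)"
    using pos by (intro divide_strict_left_mono) auto
  then show "1 / sqrt (p * q) < (c / dp + 1 / (c * dq)) / 2"
    using am_gm st unfolding s_def t_def by linarith
qed

lemma mean_at_balanced_weight:
  fixes a b :: real
  assumes "0 < a" "0 < b"
  shows "(sqrt b / sqrt a * a + b / (sqrt b / sqrt a)) / 2 = sqrt (a * b)"
proof -
  have "sqrt b / sqrt a * a = sqrt (a * b)" "b / (sqrt b / sqrt a) = sqrt (a * b)"
    using assms by (simp_all add: real_sqrt_mult field_simps)
  then show ?thesis by simp
qed

lemma sqrt_ratio_le:
  fixes p q m :: real
  assumes "1 \<le> p" "1 \<le> q" "p + q \<le> m"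
  shows "sqrt ((p + q - 2) / (p * q)) \<le> sqrt (m - 2) * (1 / sqrt (p * q))"
proof -
  have "sqrt ((p + q - 2) / (p * q)) = sqrt (p + q - 2) / sqrt (p * q)"
    by (simp add: real_sqrt_divide)
  also have "\<dots> \<le> sqrt (m - 2) / sqrt (p * q)"
    using assms by (intro divide_right_mono) auto
  finally show ?thesis by simp
qed

section \<open>Connected bipartite graphs\<close>

locale connected_bipartite =
  fixes G :: "'a graph" and X Y :: "'a set"
  assumes simple: "simple_graph G" and connected: "connected_graph G"
    and disjoint: "X \<inter> Y = {}" and verts_eq: "X \<union> Y = verts G"
    and edges_between: "\<forall>e\<in>edges G. \<exists>x\<in>X. \<exists>y\<in>Y. e = {x, y}"
begin

lemma swap: "connected_bipartite G Y X"
proof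
  show "\<forall>e\<in>edges G. \<exists>y\<in>Y. \<exists>x\<in>X. e = {y, x}"
    using edges_between by (metis insert_commute)
qed (use simple connected disjoint verts_eq in auto)

lemma finite_verts: "finite (verts G)"
  using simple by (simp add: simple_graph_def)

lemma finite_X: "finite X" and finite_Y: "finite Y"
  using finite_verts verts_eq by (metis finite_Un)+

lemma finite_edges: "finite (edges G)"
proof -
  have "edges G \<subseteq> Pow (verts G)" using simple unfolding simple_graph_def by auto
  then show ?thesis using finite_verts by (metis finite_Pow_iff finite_subset)
qed

lemma card_X_add_card_Y: "card X + card Y = card (verts G)"
  using card_Un_disjoint[OF finite_X finite_Y disjoint] verts_eq by simp

lemma adj_between: "adj G a b \<Longrightarrow> (a \<in> X \<and> b \<in> Y) \<or> (a \<in> Y \<and> b \<in> X)"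
  using edges_between unfolding adj_def by (fastforce simp: doubleton_eq_iff)

lemma no_triangle: "adj G u w \<Longrightarrow> adj G u v \<Longrightarrow> \<not> adj G w v"
  using adj_between disjoint by blast

lemma degree_pos: "adj G u v \<Longrightarrow> 0 < degree G u"
  using adj_imp_verts[OF simple] finite_verts
  unfolding degree_def neighbours_def by (auto simp: card_gt_0_iff)

lemma insert_neighbours_subset_closer:
  assumes "adj G u v"
  shows "insert u (neighbours G u - {v}) \<subseteq> closer G u v"
proof
  fix w assume w: "w \<in> insert u (neighbours G u - {v})"
  have uv: "u \<in> verts G" "v \<in> verts G" using adj_imp_verts[OF simple assms] by auto
  show "w \<in> closer G u v"
  proof (cases "w = u")
    case True
    then show ?thesis
      using uv dist_self[of u G] dist_adj[OF simple connected assms] unfolding closer_def by simp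
  next
    case False
    then have uw: "adj G u w" "w \<in> verts G" "w \<noteq> v" using w unfolding neighbours_def by auto
    have "dist G w u = 1" using dist_adj[OF simple connected adj_sym[OF uw(1)]] .
    moreover have "2 \<le> dist G w v"
      using dist_ge_2[OF simple connected uw(2) uv(2) uw(3) no_triangle[OF uw(1) assms]] .
    ultimately show ?thesis using uw(2) unfolding closer_def by simp
  qed
qed

lemma card_insert_neighbours:
  assumes "adj G u v"
  shows "card (insert u (neighbours G u - {v})) = degree G u"
proof -
  have "finite (neighbours G u)" using finite_verts unfolding neighbours_def by simp
  moreover have "u \<notin> neighbours G u" "v \<in> neighbours G u"
    using adj_imp_verts[OF simple] assms unfolding neighbours_def by auto
  ultimately show ?thesis
    unfolding degree_def by (simp add: card_Diff_singleton) (metis card_gt_0_iff empty_iff Suc_pred)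
qed

lemma degree_le_nclose: "adj G u v \<Longrightarrow> degree G u \<le> nclose G u v"
  unfolding nclose_eq_card_closer card_insert_neighbours[symmetric]
  using finite_verts
  by (intro card_mono insert_neighbours_subset_closer) (auto simp: closer_def)

lemma dist_across_ne_2:
  assumes "x \<in> X" "y \<in> Y"
  shows "dist G x y \<noteq> 2"
proof
  assume d: "dist G x y = 2"
  obtain p where p: "walk G p" "hd p = x" "last p = y" "length p = Suc (dist G x y)"
    using shortest_walk_exists[OF connected] assms verts_eq by blast
  have "adj G (p ! 0) (p ! 1)" "adj G (p ! 1) (p ! 2)"
    using walk_step[OF p(1), of 0] walk_step[OF p(1), of 1] p(4) d by (simp_all add: numeral_2_eq_2)
  moreover have "x = p ! 0" "y = p ! 2" using p walk_hd_last[OF p(1)] d by auto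
  ultimately show False using adj_between assms disjoint by blast
qed

lemma degree_less_nclose_if_nonadjacent:
  assumes "x \<in> X" "y \<in> Y" "\<not> adj G x y"
  obtains u v where "adj G u v" "degree G u < nclose G u v"
proof -
  have xy: "x \<in> verts G" "y \<in> verts G" "x \<noteq> y" using assms verts_eq disjoint by auto
  define d where "d = dist G x y"
  have "3 \<le> d"
    using dist_ge_2[OF simple connected xy assms(3)] dist_across_ne_2[OF assms(1,2)]
    unfolding d_def by linarith
  obtain p where p: "walk G p" "hd p = x" "last p = y" "length p = Suc d"
    using shortest_walk_exists[OF connected xy(1,2)] unfolding d_def .
  define u where "u = p ! (d - 1)"
  have "y = p ! d" using walk_hd_last(2)[OF p(1)] p(3,4) by simp
  then have uy: "adj G u y" unfolding u_def using walk_step[OF p(1), of "d - 1"] p(4) \<open>3 \<le> d\<close> by simp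
  have "dist G x u \<le> d - 1"
    using dist_le_walk[OF walk_take[OF p(1), of d]] p \<open>3 \<le> d\<close> unfolding u_def by simp
  then have "x \<in> closer G u y" using xy \<open>3 \<le> d\<close> unfolding closer_def d_def by simp
  moreover have "x \<notin> insert u (neighbours G u - {y})"
  proof
    assume "x \<in> insert u (neighbours G u - {y})"
    moreover have "x \<noteq> u" using uy assms(3) by auto
    ultimately have "adj G x u" unfolding neighbours_def by (simp add: adj_sym)
    then have "dist G x y \<le> 2" using dist_le_walk[OF walk_path2[OF simple _ uy]] by fastforce
    then show False using \<open>3 \<le> d\<close> unfolding d_def by simp
  qed
  ultimately have sub: "insert x (insert u (neighbours G u - {y})) \<subseteq> closer G u y"
    and notin: "x \<notin> insert u (neighbours G u - {y})"
    using insert_neighbours_subset_closer[OF uy] by auto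
  have "finite (insert u (neighbours G u - {y}))"
    using finite_verts unfolding neighbours_def by simp
  then have "Suc (degree G u) = card (insert x (insert u (neighbours G u - {y})))"
    using notin card_insert_neighbours[OF uy] by simp
  also have "\<dots> \<le> nclose G u y"
    unfolding nclose_eq_card_closer using finite_verts sub
    by (intro card_mono) (auto simp: closer_def)
  finally have "degree G u < nclose G u y" by simp
  with uy show ?thesis by (rule that)
qed

lemma end_in_eq: "x \<in> X \<Longrightarrow> y \<in> Y \<Longrightarrow> end_in X {x, y} = x"
  unfolding end_in_def using disjoint by (intro some_equality) auto

lemma edge_ends:
  assumes "e \<in> edges G"
  shows "e = {end_in X e, end_in Y e}" "end_in X e \<in> X" "end_in Y e \<in> Y"
    "adj G (end_in X e) (end_in Y e)"
proof -
  obtain x y where xy: "x \<in> X" "y \<in> Y" "e = {x, y}" using edges_between assms by blast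
  moreover have "end_in Y e = y"
    using connected_bipartite.end_in_eq[OF swap xy(2,1)] xy(3) by (simp add: insert_commute)
  ultimately show "e = {end_in X e, end_in Y e}" "end_in X e \<in> X" "end_in Y e \<in> Y"
    "adj G (end_in X e) (end_in Y e)"
    using end_in_eq assms unfolding adj_def by auto
qed

lemma card_edges_at:
  assumes "x \<in> X"
  shows "card {e \<in> edges G. end_in X e = x} = degree G x"
proof -
  have "{e \<in> edges G. end_in X e = x} = (\<lambda>w. {x, w}) ` neighbours G x"
  proof (intro set_eqI iffI)
    fix e assume "e \<in> {e \<in> edges G. end_in X e = x}"
    then have e: "e \<in> edges G" "end_in X e = x" by auto
    then have "end_in Y e \<in> neighbours G x"
      using edge_ends[OF e(1)] adj_imp_verts[OF simple] unfolding neighbours_def by auto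
    moreover have "e = {x, end_in Y e}" using edge_ends(1)[OF e(1)] e(2) by simp
    ultimately show "e \<in> (\<lambda>w. {x, w}) ` neighbours G x" by blast
  next
    fix e assume "e \<in> (\<lambda>w. {x, w}) ` neighbours G x"
    then obtain w where w: "adj G x w" "e = {x, w}" unfolding neighbours_def by auto
    then have "w \<in> Y" using adj_between assms disjoint by blast
    then show "e \<in> {e \<in> edges G. end_in X e = x}"
      using end_in_eq[OF assms] w unfolding adj_def by simp
  qed
  moreover have "inj_on (\<lambda>w. {x, w}) (neighbours G x)"
    by (rule inj_onI) (metis doubleton_eq_iff)
  ultimately show ?thesis unfolding degree_def by (simp add: card_image)
qed

lemma edge_val_end_in:
  assumes "e \<in> edges G" "\<And>a b. f a b = f b a"
  shows "edge_val G f e = f (nclose G (end_in X e) (end_in Y e)) (nclose G (end_in Y e) (end_in X e))"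
proof -
  have "end_in X e \<noteq> end_in Y e" using adj_imp_verts[OF simple edge_ends(4)[OF assms(1)]] by simp
  from edge_val_doubleton[OF this assms(2)] show ?thesis
    by (simp only: edge_ends(1)[OF assms(1), symmetric])
qed

lemma NGG_eq:
  "NGG G = (\<Sum>e\<in>edges G. 1 / sqrt (real (nclose G (end_in X e) (end_in Y e))
                                   * real (nclose G (end_in Y e) (end_in X e))))"
  unfolding NGG_def by (intro sum.cong refl edge_val_end_in) (simp_all add: mult.commute)

lemma GG_eq:
  "GG G = (\<Sum>e\<in>edges G.
     sqrt ((real (nclose G (end_in X e) (end_in Y e)) + real (nclose G (end_in Y e) (end_in X e)) - 2)
         / (real (nclose G (end_in X e) (end_in Y e)) * real (nclose G (end_in Y e) (end_in X e)))))"
  unfolding GG_def by (intro sum.cong refl edge_val_end_in) (simp_all add: mult.commute add.commute)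

lemma NGG_le_mean_degrees:
  assumes "0 < c"
  defines "B \<equiv> (\<Sum>e\<in>edges G.
    (c / real (degree G (end_in X e)) + 1 / (c * real (degree G (end_in Y e)))) / 2)"
  shows "NGG G \<le> B"
    and "adj G u v \<Longrightarrow> degree G u < nclose G u v \<Longrightarrow> NGG G < B"
proof -
  define t where "t e = 1 / sqrt (real (nclose G (end_in X e) (end_in Y e))
                                 * real (nclose G (end_in Y e) (end_in X e)))" for e
  define b where "b e = (c / real (degree G (end_in X e))
                         + 1 / (c * real (degree G (end_in Y e)))) / 2" for e
  have t_le: "t e \<le> b e"
    and t_less: "degree G (end_in X e) < nclose G (end_in X e) (end_in Y e)
       \<or> degree G (end_in Y e) < nclose G (end_in Y e) (end_in X e) \<Longrightarrow> t e < b e"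
    if "e \<in> edges G" for e
  proof -
    have xy: "adj G (end_in X e) (end_in Y e)" using edge_ends(4)[OF that] .
    note facts = degree_pos[OF xy] degree_pos[OF adj_sym[OF xy]]
      degree_le_nclose[OF xy] degree_le_nclose[OF adj_sym[OF xy]] assms(1)
    show "t e \<le> b e" unfolding t_def b_def
      by (rule inverse_sqrt_mult_le_mean(1)) (use facts in auto)
    assume "degree G (end_in X e) < nclose G (end_in X e) (end_in Y e)
       \<or> degree G (end_in Y e) < nclose G (end_in Y e) (end_in X e)"
    then show "t e < b e" unfolding t_def b_def
      by (intro inverse_sqrt_mult_le_mean(2)) (use facts in auto)
  qed
  have NGG_t: "NGG G = sum t (edges G)" unfolding NGG_eq t_def ..
  show "NGG G \<le> B" unfolding NGG_t B_def b_def[symmetric] by (rule sum_mono[OF t_le])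
  assume uv: "adj G u v" "degree G u < nclose G u v"
  from uv(1) have e: "{u, v} \<in> edges G" unfolding adj_def .
  have "end_in X {u, v} = u \<and> end_in Y {u, v} = v \<or> end_in X {u, v} = v \<and> end_in Y {u, v} = u"
    using adj_between[OF uv(1)] end_in_eq connected_bipartite.end_in_eq[OF swap]
    by (metis insert_commute)
  then have "t {u, v} < b {u, v}" using t_less[OF e] uv(2) by auto
  then show "NGG G < B"
    unfolding NGG_t B_def b_def[symmetric]
    by (intro sum_strict_mono_ex1[OF finite_edges] ballI t_le) (use e in blast)+
qed

lemma sum_mean_degrees:
  "(\<Sum>e\<in>edges G. (c / real (degree G (end_in X e)) + 1 / (c * real (degree G (end_in Y e)))) / 2)
   = (c * real (card (end_in X ` edges G)) + real (card (end_in Y ` edges G)) / c) / 2"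
proof -
  have inverse_degrees: "(\<Sum>e\<in>edges G. 1 / real (degree G (end_in S e)))
      = real (card (end_in S ` edges G))"
    if "connected_bipartite G S T" for S T
  proof -
    have "(\<Sum>e\<in>edges G. 1 / real (degree G (end_in S e)))
        = (\<Sum>e\<in>edges G. 1 / real (card {e' \<in> edges G. end_in S e' = end_in S e}))"
      using connected_bipartite.card_edges_at[OF that connected_bipartite.edge_ends(2)[OF that]]
      by (intro sum.cong) simp_all
    then show ?thesis using sum_inverse_card_fibres[OF finite_edges] by simp
  qed
  have "(\<Sum>e\<in>edges G. (c / real (degree G (end_in X e))
                          + 1 / (c * real (degree G (end_in Y e)))) / 2)
      = (c * (\<Sum>e\<in>edges G. 1 / real (degree G (end_in X e)))
         + (\<Sum>e\<in>edges G. 1 / real (degree G (end_in Y e))) / c) / 2"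
    by (simp add: sum_divide_distrib[symmetric] sum.distrib sum_distrib_left mult.commute)
      (simp add: sum_divide_distrib mult.commute)
  with inverse_degrees[OF connected_bipartite_axioms] inverse_degrees[OF swap]
  show ?thesis by simp
qed

lemma NGG_le_sqrt_card_mult:
  shows "NGG G \<le> sqrt (real (card X) * real (card Y))"
    and "adj G u v \<Longrightarrow> degree G u < nclose G u v \<Longrightarrow> NGG G < sqrt (real (card X) * real (card Y))"
proof -
  have bound: "NGG G \<le> sqrt (real (card X) * real (card Y))
      \<and> (adj G u v \<and> degree G u < nclose G u v \<longrightarrow> NGG G < sqrt (real (card X) * real (card Y)))"
    if "e \<in> edges G" for e
  proof -
    have "0 < card X" "0 < card Y"
      using edge_ends(2,3)[OF that] finite_X finite_Y by (auto simp: card_gt_0_iff)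
    define c where "c = sqrt (real (card Y)) / sqrt (real (card X))"
    have "0 < c" unfolding c_def using \<open>0 < card X\<close> \<open>0 < card Y\<close> by simp
    have "card (end_in X ` edges G) \<le> card X" "card (end_in Y ` edges G) \<le> card Y"
      using edge_ends(2,3) by (auto intro!: card_mono finite_X finite_Y)
    then have "(c * real (card (end_in X ` edges G)) + real (card (end_in Y ` edges G)) / c) / 2
        \<le> (c * real (card X) + real (card Y) / c) / 2"
      using \<open>0 < c\<close> by (intro divide_right_mono add_mono mult_left_mono) auto
    also have "\<dots> = sqrt (real (card X) * real (card Y))"
      unfolding c_def using \<open>0 < card X\<close> \<open>0 < card Y\<close>
      by (intro mean_at_balanced_weight) auto
    finally show ?thesis
      using NGG_le_mean_degrees[OF \<open>0 < c\<close>] unfolding sum_mean_degrees by fastforce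
  qed
  show "NGG G \<le> sqrt (real (card X) * real (card Y))"
    using bound by (cases "edges G = {}") (auto simp: NGG_def)
  show "adj G u v \<Longrightarrow> degree G u < nclose G u v \<Longrightarrow> NGG G < sqrt (real (card X) * real (card Y))"
    using bound unfolding adj_def by blast
qed

lemma nclose_ge_1: "adj G u v \<Longrightarrow> 1 \<le> nclose G u v"
  using degree_pos degree_le_nclose by fastforce

lemma GG_le_sqrt_mult_NGG: "GG G \<le> sqrt (real (card (verts G)) - 2) * NGG G"
proof -
  have "GG G \<le> (\<Sum>e\<in>edges G. sqrt (real (card (verts G)) - 2)
      * (1 / sqrt (real (nclose G (end_in X e) (end_in Y e))
                   * real (nclose G (end_in Y e) (end_in X e)))))"
    unfolding GG_eq
  proof (intro sum_mono sqrt_ratio_le)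
    fix e assume "e \<in> edges G"
    then have "adj G (end_in X e) (end_in Y e)" by (rule edge_ends(4))
    then show "1 \<le> real (nclose G (end_in X e) (end_in Y e))"
      "1 \<le> real (nclose G (end_in Y e) (end_in X e))"
      using nclose_ge_1 adj_sym by fastforce+
    show "real (nclose G (end_in X e) (end_in Y e)) + real (nclose G (end_in Y e) (end_in X e))
        \<le> real (card (verts G))"
      using nclose_add_nclose_le[OF finite_verts] by (simp flip: of_nat_add)
  qed
  also have "\<dots> = sqrt (real (card (verts G)) - 2) * NGG G"
    unfolding NGG_eq by (simp add: sum_distrib_left)
  finally show ?thesis .
qed

lemma edges_nonempty:
  assumes "2 \<le> card (verts G)"
  shows "edges G \<noteq> {}"
proof -
  obtain u v where uv: "u \<in> verts G" "v \<in> verts G" "u \<noteq> v"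
    using assms card_le_Suc0_iff_eq[OF finite_verts] by force
  obtain p where p: "walk G p" "hd p = u" "last p = v" "length p = Suc (dist G u v)"
    using shortest_walk_exists[OF connected uv(1,2)] .
  have "adj G (p ! 0) (p ! 1)"
    using walk_step[OF p(1), of 0] p(4) dist_pos[OF connected uv] by simp
  then show ?thesis unfolding adj_def by blast
qed

end

section \<open>Complete bipartite graphs\<close>

lemma verts_complete_bipartite: "verts (complete_bipartite a b) = {0..<a+b}"
  by (simp add: complete_bipartite_def verts_def)

lemma edges_complete_bipartite:
  "edges (complete_bipartite a b) = {{i, j} | i j. i < a \<and> a \<le> j \<and> j < a + b}"
  by (simp add: complete_bipartite_def edges_def)

lemma adj_complete_bipartite:
  "adj (complete_bipartite a b) u w \<longleftrightarrow>
     (u < a \<and> a \<le> w \<and> w < a + b) \<or> (w < a \<and> a \<le> u \<and> u < a + b)"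
  unfolding adj_def edges_complete_bipartite by (auto simp: doubleton_eq_iff)

lemma edge_complete_bipartiteE:
  assumes "e \<in> edges (complete_bipartite a b)"
  obtains i j where "e = {i, j}" "i < a" "a \<le> j" "j < a + b"
  using assms unfolding edges_complete_bipartite by blast

lemma simple_complete_bipartite: "simple_graph (complete_bipartite a b)"
  unfolding simple_graph_def
proof (intro conjI ballI)
  fix e assume "e \<in> edges (complete_bipartite a b)"
  then obtain i j where "e = {i, j}" "i < a" "a \<le> j" "j < a + b"
    by (rule edge_complete_bipartiteE)
  then show "\<exists>u v. e = {u, v} \<and> u \<noteq> v \<and> u \<in> verts (complete_bipartite a b)
      \<and> v \<in> verts (complete_bipartite a b)"
    unfolding verts_complete_bipartite by (intro exI[of _ i] exI[of _ j]) auto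
qed (simp add: verts_complete_bipartite)

lemma connected_complete_bipartite:
  assumes "1 \<le> a" "1 \<le> b"
  shows "connected_graph (complete_bipartite a b)"
  unfolding connected_graph_def
proof (intro conjI ballI)
  show "verts (complete_bipartite a b) \<noteq> {}"
    using assms unfolding verts_complete_bipartite by simp
  fix u v assume "u \<in> verts (complete_bipartite a b)" "v \<in> verts (complete_bipartite a b)"
  then have uv: "u < a + b" "v < a + b" unfolding verts_complete_bipartite by auto
  note walk2 = walk_edge[OF simple_complete_bipartite]
  note walk3 = walk_path2[OF simple_complete_bipartite]
  consider "u < a" "v < a" | "u < a \<longleftrightarrow> \<not> v < a" | "a \<le> u" "a \<le> v" by linarith
  then show "\<exists>p. walk (complete_bipartite a b) p \<and> hd p = u \<and> last p = v"
  proof cases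
    case 1
    have "walk (complete_bipartite a b) [u, a, v]"
      by (rule walk3) (use 1 assms in \<open>auto simp: adj_complete_bipartite\<close>)
    then show ?thesis by force
  next
    case 2
    have "walk (complete_bipartite a b) [u, v]"
      by (rule walk2) (use 2 uv in \<open>auto simp: adj_complete_bipartite\<close>)
    then show ?thesis by force
  next
    case 3
    have "walk (complete_bipartite a b) [u, 0, v]"
      by (rule walk3) (use 3 uv assms in \<open>auto simp: adj_complete_bipartite\<close>)
    then show ?thesis by force
  qed
qed

lemma connected_bipartite_complete_bipartite:
  assumes "1 \<le> a" "1 \<le> b"
  shows "connected_bipartite (complete_bipartite a b) {0..<a} {a..<a+b}"
proof
  show "\<forall>e\<in>edges (complete_bipartite a b). \<exists>x\<in>{0..<a}. \<exists>y\<in>{a..<a + b}. e = {x, y}"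
    by (metis atLeastLessThan_iff edge_complete_bipartiteE zero_le)
qed (auto simp: simple_complete_bipartite connected_complete_bipartite[OF assms]
       verts_complete_bipartite)

lemma bipartite_complete_bipartite:
  assumes "1 \<le> a" "1 \<le> b"
  shows "bipartite (complete_bipartite a b)"
  using connected_bipartite_complete_bipartite[OF assms]
  unfolding bipartite_def connected_bipartite_def by blast

lemma degree_complete_bipartite:
  "i < a \<Longrightarrow> degree (complete_bipartite a b) i = b"
  "a \<le> j \<Longrightarrow> j < a + b \<Longrightarrow> degree (complete_bipartite a b) j = a"
proof -
  have "neighbours (complete_bipartite a b) i = {a..<a+b}" if "i < a"
    using that unfolding neighbours_def verts_complete_bipartite adj_complete_bipartite by auto
  moreover have "neighbours (complete_bipartite a b) j = {0..<a}" if "a \<le> j" "j < a + b"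
    using that unfolding neighbours_def verts_complete_bipartite adj_complete_bipartite by auto
  ultimately show "i < a \<Longrightarrow> degree (complete_bipartite a b) i = b"
    "a \<le> j \<Longrightarrow> j < a + b \<Longrightarrow> degree (complete_bipartite a b) j = a"
    unfolding degree_def by auto
qed

lemma card_edges_complete_bipartite: "card (edges (complete_bipartite a b)) = a * b"
proof -
  have "edges (complete_bipartite a b) = (\<lambda>(i, j). {i, j}) ` ({0..<a} \<times> {a..<a+b})"
  proof (intro set_eqI iffI)
    fix e assume "e \<in> edges (complete_bipartite a b)"
    then obtain i j where "e = {i, j}" "i < a" "a \<le> j" "j < a + b"
      by (rule edge_complete_bipartiteE)
    then show "e \<in> (\<lambda>(i, j). {i, j}) ` ({0..<a} \<times> {a..<a+b})"
      by (intro image_eqI[of _ _ "(i, j)"]) auto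
  next
    fix e assume "e \<in> (\<lambda>(i, j). {i, j}) ` ({0..<a} \<times> {a..<a+b})"
    then obtain i j where "e = {i, j}" "i < a" "a \<le> j" "j < a + b" by auto
    then show "e \<in> edges (complete_bipartite a b)" unfolding edges_complete_bipartite by blast
  qed
  moreover have "inj_on (\<lambda>(i, j). {i, j}) ({0..<a} \<times> {a..<a+b})"
    by (rule inj_onI) (auto simp: doubleton_eq_iff)
  ultimately show ?thesis by (simp add: card_image)
qed

text \<open>In K_{a,b} every vertex is closer to itself and to its neighbours, which already
  exhausts the vertex set.\<close>

lemma nclose_complete_bipartite:
  assumes "i < a" "a \<le> j" "j < a + b"
  shows "nclose (complete_bipartite a b) i j = b" "nclose (complete_bipartite a b) j i = a"
proof -
  interpret connected_bipartite "complete_bipartite a b" "{0..<a}" "{a..<a+b}"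
    using connected_bipartite_complete_bipartite assms by simp
  have ij: "adj (complete_bipartite a b) i j" using assms by (simp add: adj_complete_bipartite)
  have "b \<le> nclose (complete_bipartite a b) i j" "a \<le> nclose (complete_bipartite a b) j i"
    using degree_le_nclose[OF ij] degree_le_nclose[OF adj_sym[OF ij]]
      degree_complete_bipartite assms by simp_all
  moreover have "nclose (complete_bipartite a b) i j + nclose (complete_bipartite a b) j i \<le> a + b"
    using nclose_add_nclose_le[OF finite_verts] by (simp add: verts_complete_bipartite)
  ultimately show "nclose (complete_bipartite a b) i j = b" "nclose (complete_bipartite a b) j i = a"
    by simp_all
qed

lemma NGG_GG_complete_bipartite:
  assumes "1 \<le> a" "1 \<le> b"
  shows "NGG (complete_bipartite a b) = sqrt (real a * real b)"
    and "GG (complete_bipartite a b) = sqrt (real (a + b) - 2) * sqrt (real a * real b)"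
proof -
  interpret connected_bipartite "complete_bipartite a b" "{0..<a}" "{a..<a+b}"
    by (rule connected_bipartite_complete_bipartite[OF assms])
  have n: "nclose (complete_bipartite a b) (end_in {0..<a} e) (end_in {a..<a+b} e) = b"
    "nclose (complete_bipartite a b) (end_in {a..<a+b} e) (end_in {0..<a} e) = a"
    if "e \<in> edges (complete_bipartite a b)" for e
    using nclose_complete_bipartite edge_ends(2,3)[OF that] by auto
  have NGG_sum: "NGG (complete_bipartite a b)
      = (\<Sum>e\<in>edges (complete_bipartite a b). 1 / sqrt (real a * real b))"
    unfolding NGG_eq by (intro sum.cong) (simp_all add: n mult.commute)
  also have "\<dots> = real a * real b / sqrt (real a * real b)"
    by (simp add: card_edges_complete_bipartite)
  also have "\<dots> = sqrt (real a * real b)" by (rule real_div_sqrt) simp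
  finally show NGG: "NGG (complete_bipartite a b) = sqrt (real a * real b)" .
  have "GG (complete_bipartite a b)
      = (\<Sum>e\<in>edges (complete_bipartite a b). sqrt (real (a + b) - 2) * (1 / sqrt (real a * real b)))"
    unfolding GG_eq
    by (intro sum.cong) (simp_all add: n real_sqrt_divide add.commute mult.commute)
  also have "\<dots> = sqrt (real (a + b) - 2) * NGG (complete_bipartite a b)"
    unfolding NGG_sum by (simp add: sum_distrib_left)
  finally show "GG (complete_bipartite a b) = sqrt (real (a + b) - 2) * sqrt (real a * real b)"
    unfolding NGG .
qed

context connected_bipartite
begin

lemma graph_iso_complete_bipartite:
  assumes "\<forall>x\<in>X. \<forall>y\<in>Y. adj G x y"
  shows "graph_iso G (complete_bipartite (card X) (card Y))"
proof -
  define a where "a = card X"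
  define b where "b = card Y"
  obtain g where g: "bij_betw g X {0..<a}"
    using finite_same_card_bij[OF finite_X] unfolding a_def by force
  obtain h where h: "bij_betw h Y {a..<a+b}"
    using finite_same_card_bij[OF finite_Y] unfolding b_def by force
  define f where "f z = (if z \<in> X then g z else h z)" for z
  have fX: "bij_betw f X {0..<a}"
    using g unfolding f_def by (rule bij_betw_cong[THEN iffD1, rotated]) auto
  have "bij_betw f Y {a..<a+b} \<longleftrightarrow> bij_betw h Y {a..<a+b}"
    using disjoint unfolding f_def by (intro bij_betw_cong) auto
  with h have fY: "bij_betw f Y {a..<a+b}" by simp
  have "bij_betw f (X \<union> Y) ({0..<a} \<union> {a..<a+b})" by (rule bij_betw_combine[OF fX fY]) auto
  then have bij: "bij_betw f (verts G) (verts (complete_bipartite a b))"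
    unfolding verts_eq verts_complete_bipartite by (simp add: ivl_disj_un)
  have "{u, w} \<in> edges G \<longleftrightarrow> {f u, f w} \<in> edges (complete_bipartite a b)"
    if "u \<in> verts G" "w \<in> verts G" for u w
  proof -
    have "{u, w} \<in> edges G \<longleftrightarrow> (u \<in> X \<and> w \<in> Y) \<or> (u \<in> Y \<and> w \<in> X)"
      using adj_between[of u w] assms adj_sym[of G w u] unfolding adj_def by blast
    also have "\<dots> \<longleftrightarrow> adj (complete_bipartite a b) (f u) (f w)"
    proof -
      have side: "z \<in> X \<and> f z < a \<or> z \<in> Y \<and> a \<le> f z \<and> f z < a + b" if "z \<in> verts G" for z
        using that verts_eq bij_betwE[OF fX] bij_betwE[OF fY] by auto
      show ?thesis
        unfolding adj_complete_bipartite using side[OF that(1)] side[OF that(2)] disjoint by auto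
    qed
    finally show ?thesis unfolding adj_def .
  qed
  with bij show ?thesis unfolding graph_iso_def a_def b_def by blast
qed

end

section \<open>The extremal graphs\<close>

lemma mult_le_balanced_split:
  fixes x y :: nat
  defines "n \<equiv> x + y"
  shows "x * y \<le> n div 2 * (n - n div 2)"
    and "x * y = n div 2 * (n - n div 2) \<Longrightarrow> x = n div 2 \<or> y = n div 2"
proof -
  define a where "a = n div 2"
  define b where "b = n - n div 2"
  have ab: "a + b = n" "a \<le> b" "b \<le> a + 1" unfolding a_def b_def by auto
  have y: "int y = int a + int b - int x" using ab unfolding n_def by simp
  have prod: "int x * int y - int a * int b = (int x - int a) * (int b - int x)"
    unfolding y by (simp add: algebra_simps)
  moreover have "(int x - int a) * (int b - int x) \<le> 0"
    using ab by (cases "x \<le> a") (auto intro: mult_nonpos_nonneg mult_nonneg_nonpos)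
  ultimately have "int x * int y \<le> int a * int b" by linarith
  then show "x * y \<le> n div 2 * (n - n div 2)"
    unfolding a_def b_def by (simp only: of_nat_mult[symmetric] of_nat_le_iff)
  assume "x * y = n div 2 * (n - n div 2)"
  then have "int x * int y = int a * int b"
    unfolding a_def b_def by (simp only: of_nat_mult[symmetric] of_nat_eq_iff)
  then have "(int x - int a) * (int b - int x) = 0" using prod by simp
  then have "x = a \<or> x = b" by auto
  then show "x = n div 2 \<or> y = n div 2" using ab unfolding a_def n_def by auto
qed

context connected_bipartite
begin

context
  fixes n :: nat
  assumes card_verts: "card (verts G) = n"
begin

lemma card_mult_le_balanced: "card X * card Y \<le> n div 2 * (n - n div 2)"
  using mult_le_balanced_split(1)[of "card X" "card Y"] card_X_add_card_Y card_verts by simp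

lemma NGG_le_balanced: "NGG G \<le> sqrt (real (n div 2) * real (n - n div 2))"
proof -
  have "sqrt (real (card X) * real (card Y)) \<le> sqrt (real (n div 2) * real (n - n div 2))"
    using card_mult_le_balanced by (simp only: of_nat_mult[symmetric] of_nat_le_iff real_sqrt_le_iff)
  then show ?thesis using NGG_le_sqrt_card_mult(1) by linarith
qed

lemma GG_le_balanced:
  assumes "2 \<le> n"
  shows "GG G \<le> sqrt (real n - 2) * sqrt (real (n div 2) * real (n - n div 2))"
proof -
  have "GG G \<le> sqrt (real n - 2) * NGG G" using GG_le_sqrt_mult_NGG card_verts by simp
  also have "\<dots> \<le> sqrt (real n - 2) * sqrt (real (n div 2) * real (n - n div 2))"
    using assms by (intro mult_left_mono NGG_le_balanced) simp
  finally show ?thesis .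
qed

lemma graph_iso_balanced_if_complete:
  assumes "\<forall>x\<in>X. \<forall>y\<in>Y. adj G x y" "card X * card Y = n div 2 * (n - n div 2)"
  shows "graph_iso G (complete_bipartite (n div 2) (n - n div 2))"
proof -
  have sum: "card X + card Y = n" using card_X_add_card_Y card_verts by simp
  consider "card X = n div 2" | "card Y = n div 2"
    using mult_le_balanced_split(2)[of "card X" "card Y", unfolded sum] assms(2) by blast
  then show ?thesis
  proof cases
    case 1
    moreover have "card Y = n - n div 2" using sum 1 by linarith
    ultimately show ?thesis using graph_iso_complete_bipartite[OF assms(1)] by simp
  next
    case 2
    moreover have "card X = n - n div 2" using sum 2 by linarith
    moreover have "\<forall>y\<in>Y. \<forall>x\<in>X. adj G y x"
      using assms(1) adj_sym[of G] by (simp add: Ball_def)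
    ultimately show ?thesis using connected_bipartite.graph_iso_complete_bipartite[OF swap] by simp
  qed
qed

lemma graph_iso_if_NGG_eq_balanced:
  assumes "NGG G = sqrt (real (n div 2) * real (n - n div 2))"
  shows "graph_iso G (complete_bipartite (n div 2) (n - n div 2))"
proof (rule graph_iso_balanced_if_complete)
  have le: "sqrt (real (card X) * real (card Y)) \<le> sqrt (real (n div 2) * real (n - n div 2))"
    using card_mult_le_balanced by (simp only: of_nat_mult[symmetric] of_nat_le_iff real_sqrt_le_iff)
  show "\<forall>x\<in>X. \<forall>y\<in>Y. adj G x y"
  proof (intro ballI, rule ccontr)
    fix x y assume "x \<in> X" "y \<in> Y" "\<not> adj G x y"
    then obtain u v where "adj G u v" "degree G u < nclose G u v"
      by (rule degree_less_nclose_if_nonadjacent)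
    from NGG_le_sqrt_card_mult(2)[OF this] show False using le assms by linarith
  qed
  have "sqrt (real (n div 2) * real (n - n div 2)) \<le> sqrt (real (card X) * real (card Y))"
    using NGG_le_sqrt_card_mult(1) assms by linarith
  then have "n div 2 * (n - n div 2) \<le> card X * card Y"
    by (simp only: of_nat_mult[symmetric] of_nat_le_iff real_sqrt_le_iff)
  then show "card X * card Y = n div 2 * (n - n div 2)"
    using card_mult_le_balanced by simp
qed

text \<open>For n = 2 the factor sqrt (n - 2) vanishes and GG carries no information, but then
  G is a single edge.\<close>

lemma graph_iso_if_GG_eq_balanced:
  assumes "2 \<le> n" "GG G = sqrt (real n - 2) * sqrt (real (n div 2) * real (n - n div 2))"
  shows "graph_iso G (complete_bipartite (n div 2) (n - n div 2))"
proof (cases "n = 2")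
  case True
  obtain e where "e \<in> edges G" using edges_nonempty assms(1) card_verts by blast
  note e = edge_ends[OF this]
  have "0 < card X" "0 < card Y" using e(2,3) finite_X finite_Y by (auto simp: card_gt_0_iff)
  then have "card X = 1" "card Y = 1" using card_X_add_card_Y card_verts True by linarith+
  then obtain x y where "X = {x}" "Y = {y}" by (metis card_1_singletonE)
  then have "\<forall>x\<in>X. \<forall>y\<in>Y. adj G x y" using e(2-4) by simp
  then show ?thesis
    using graph_iso_balanced_if_complete \<open>card X = 1\<close> \<open>card Y = 1\<close> True by simp
next
  case False
  then have "0 < sqrt (real n - 2)" using assms(1) by simp
  moreover have "GG G \<le> sqrt (real n - 2) * NGG G"
    using GG_le_sqrt_mult_NGG card_verts by simp
  ultimately have "sqrt (real (n div 2) * real (n - n div 2)) \<le> NGG G"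
    using assms(2) by simp
  then show ?thesis
    using NGG_le_balanced by (intro graph_iso_if_NGG_eq_balanced) simp
qed

end

end

theorem theorem5:
  fixes n :: nat
  assumes "n \<ge> 2"
  defines "K \<equiv> complete_bipartite (n div 2) (n - n div 2)"
  shows "simple_graph K \<and> connected_graph K \<and> bipartite K \<and> card (verts K) = n \<and>
    (\<forall>G :: 'a graph. simple_graph G \<and> connected_graph G \<and> bipartite G \<and> card (verts G) = n
       \<longrightarrow> NGG G \<le> NGG K \<and> GG G \<le> GG K \<and>
           (NGG G = NGG K \<longrightarrow> graph_iso G K) \<and>
           (GG G = GG K \<longrightarrow> graph_iso G K))"
proof -
  have a: "1 \<le> n div 2" and b: "1 \<le> n - n div 2" using assms(1) by auto
  have NGG_K: "NGG K = sqrt (real (n div 2) * real (n - n div 2))"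
    and GG_K: "GG K = sqrt (real n - 2) * sqrt (real (n div 2) * real (n - n div 2))"
    using NGG_GG_complete_bipartite[OF a b] assms(1) unfolding K_def by simp_all
  have "simple_graph K \<and> connected_graph K \<and> bipartite K \<and> card (verts K) = n"
    unfolding K_def using simple_complete_bipartite connected_complete_bipartite[OF a b]
      bipartite_complete_bipartite[OF a b] by (simp add: verts_complete_bipartite)
  moreover have "NGG G \<le> NGG K \<and> GG G \<le> GG K \<and>
      (NGG G = NGG K \<longrightarrow> graph_iso G K) \<and> (GG G = GG K \<longrightarrow> graph_iso G K)"
    if "simple_graph G" "connected_graph G" "bipartite G" "card (verts G) = n" for G :: "'a graph"
  proof -
    obtain X Y where "X \<inter> Y = {}" "X \<union> Y = verts G" "\<forall>e\<in>edges G. \<exists>x\<in>X. \<exists>y\<in>Y. e = {x, y}"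
      using \<open>bipartite G\<close> unfolding bipartite_def by blast
    with that interpret connected_bipartite G X Y by unfold_locales
    note n = \<open>card (verts G) = n\<close>
    show ?thesis
      unfolding NGG_K GG_K unfolding K_def
      using NGG_le_balanced[OF n] GG_le_balanced[OF n assms(1)]
        graph_iso_if_NGG_eq_balanced[OF n] graph_iso_if_GG_eq_balanced[OF n assms(1)] by blast
  qed
  ultimately show ?thesis by blast
qed

end
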